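(* For every $n\in\{2,6,10,\dots\}$, every maximal increasing path of $f_n$ starting at the origin $(0,\dots,0)$ ends at the all-ones vertex $(1,1,\dots,1)$. Equivalently, the only local maximum of $f_n$ reachable from the origin by local search is $(1,\dots,1)$.
   Context: For $n\in\{2,6,10,\dots\}$ define polynomials $f_n$ in variables $x_1,\dots,x_n$ (evaluated on $\{0,1\}^n$) recursively. Set $f_2(x_1,x_2):=x_1+x_2$. For $n\in\{2,6,10,\dots\}$, write $\mathbf{x}=(x_1,\dots,x_n)$, $S:=\sum_{i=1}^n x_i$, let $M_n:=\max_{\{0,1\}^n} f_n-\min_{\{0,1\}^n} f_n+1$, and define $f_{n+4}(\mathbf{x},x_{n+1},x_{n+2},x_{n+3},x_{n+4}) := f_n(\mathbf{x}) - M_n n^2 x_{n+1} + M_n(n+1) S x_{n+1} - x_{n+2} - 2M_n n S x_{n+2} + 2M_n n(n+2) x_{n+1}x_{n+2} - 4 S x_{n+3} + 2x_{n+1}x_{n+3} + 2x_{n+2}x_{n+3} - 3x_{n+3} + (M_n(n-1)+4) S x_{n+4} + 6M_n n^2 x_{n+3}x_{n+4} - 5M_n n^2 x_{n+4}$. For a function $f:\{0,1\}^m\to\mathbb{R}$, an increasing path is a sequence of vertices $v_0,v_1,\dots,v_k$ of $\{0,1\}^m$ such that consecutive vertices differ in exactly one coordinate and $f(v_{j+1})>f(v_j)$ for all $j$. It is maximal if it cannot be extended, i.e. its last vertex is a local maximum (no neighbor has strictly larger value). The length of the path is $k$. *)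

theory Defs
  imports Main
begin

text \<open>Vertices of the cube {0,1}^m are represented as functions x :: nat => int
  with x i in {0,1} for i < m and x i = 0 for i >= m. Coordinate x_(i+1) of the
  paper is x i here (0-based indexing).\<close>

definition cube :: "nat \<Rightarrow> (nat \<Rightarrow> int) set" where
  "cube m = {x. (\<forall>i<m. x i \<in> {0,1}) \<and> (\<forall>i\<ge>m. x i = 0)}"

definition origin :: "nat \<Rightarrow> int" where
  "origin = (\<lambda>i. 0)"

definition ones :: "nat \<Rightarrow> nat \<Rightarrow> int" where
  "ones m = (\<lambda>i. if i < m then 1 else 0)"

text \<open>fpoly k is the function f_n for n = 4k+2.\<close>
primrec fpoly :: "nat \<Rightarrow> (nat \<Rightarrow> int) \<Rightarrow> int" where
  "fpoly 0 = (\<lambda>x. x 0 + x 1)"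
| "fpoly (Suc k) =
     (let g = fpoly k; n = 4 * k + 2;
          M = Max (g ` cube n) - Min (g ` cube n) + 1;
          ni = int n
      in (\<lambda>x. let S = (\<Sum>i<n. x i);
                  a = x n; b = x (n+1); c = x (n+2); d = x (n+3)
              in g x - M * ni^2 * a + M * (ni+1) * S * a - b - 2 * M * ni * S * b
                 + 2 * M * ni * (ni+2) * a * b - 4 * S * c + 2 * a * c + 2 * b * c
                 - 3 * c + (M * (ni - 1) + 4) * S * d + 6 * M * ni^2 * c * d
                 - 5 * M * ni^2 * d))"

definition adjacent :: "nat \<Rightarrow> (nat \<Rightarrow> int) \<Rightarrow> (nat \<Rightarrow> int) \<Rightarrow> bool" where
  "adjacent m u v \<longleftrightarrow> u \<in> cube m \<and> v \<in> cube m \<and> card {i. i < m \<and> u i \<noteq> v i} = 1"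

definition increasing_path :: "((nat \<Rightarrow> int) \<Rightarrow> int) \<Rightarrow> nat \<Rightarrow> (nat \<Rightarrow> int) list \<Rightarrow> bool" where
  "increasing_path f m vs \<longleftrightarrow> vs \<noteq> [] \<and> (\<forall>v\<in>set vs. v \<in> cube m) \<and>
     (\<forall>j. Suc j < length vs \<longrightarrow> adjacent m (vs ! j) (vs ! Suc j) \<and> f (vs ! j) < f (vs ! Suc j))"

definition local_max :: "((nat \<Rightarrow> int) \<Rightarrow> int) \<Rightarrow> nat \<Rightarrow> (nat \<Rightarrow> int) \<Rightarrow> bool" where
  "local_max f m v \<longleftrightarrow> v \<in> cube m \<and> (\<forall>w. adjacent m v w \<longrightarrow> \<not> f v < f w)"

definition maximal_increasing_path :: "((nat \<Rightarrow> int) \<Rightarrow> int) \<Rightarrow> nat \<Rightarrow> (nat \<Rightarrow> int) list \<Rightarrow> bool" where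
  "maximal_increasing_path f m vs \<longleftrightarrow> increasing_path f m vs \<and> local_max f m (last vs)"

end

theory Submission
  imports Defs
begin

(* Write f_(n+4) = f_n + G(S, x_(n+1), ..., x_(n+4)) with S = x_1 + ... + x_n. Local search from
   the origin moves the new coordinates through the stages 0000, 1000, 1100, 1110, 1111 and never
   back. At stages 0000 and 1111 the coefficient of S in G vanishes, so the search is local search
   for f_n on the old coordinates. The step to 1000 is improving only when S = n, the step to 1110
   only when S = 0, and at stages 1000 and 1110 flipping an old coordinate costs more than M_n,
   which exceeds every change of f_n. At a local maximum the stage cannot be 1000 or 1110, nor
   1100 (there either S = 0 and the step to 1110 improves, or clearing an old coordinate gains
   M_n (n - 1) in G); at 0000 and 1111 the old coordinates form a local maximum of f_n reachable
   from the origin, hence are all ones by induction, which also rules out 0000. *)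

definition flip :: "(nat \<Rightarrow> int) \<Rightarrow> nat \<Rightarrow> nat \<Rightarrow> int" where
  "flip v j = v(j := 1 - v j)"

lemma cube_values: "v \<in> cube m \<Longrightarrow> i < m \<Longrightarrow> v i = 0 \<or> v i = 1"
  by (auto simp: cube_def)

lemma cube_eq_onesI:
  assumes "v \<in> cube m" and "\<And>i. i < m \<Longrightarrow> v i = 1"
  shows "v = ones m"
proof
  fix i show "v i = ones m i"
    using assms by (cases "i < m") (simp_all add: cube_def ones_def)
qed

lemma cube_eq_originI:
  assumes "v \<in> cube m" and "\<And>i. i < m \<Longrightarrow> v i = 0"
  shows "v = origin"
proof
  fix i show "v i = origin i"
    using assms by (cases "i < m") (simp_all add: cube_def origin_def)
qed

lemma origin_in_cube: "origin \<in> cube m"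
  by (simp add: cube_def origin_def)

lemma flip_in_cube: "v \<in> cube m \<Longrightarrow> j < m \<Longrightarrow> flip v j \<in> cube m"
  by (auto simp: cube_def flip_def)

lemma finite_cube: "finite (cube m)"
proof -
  have "cube m \<subseteq> (\<lambda>A i. if i \<in> A then 1 else 0) ` Pow {..<m}"
  proof
    fix v assume v: "v \<in> cube m"
    have "v i = (if i \<in> {i. i < m \<and> v i = 1} then 1 else 0)" for i
      using cube_values[OF v, of i] v by (cases "i < m") (auto simp: cube_def)
    then have "v = (\<lambda>i. if i \<in> {i. i < m \<and> v i = 1} then 1 else 0)"
      by (rule ext)
    then show "v \<in> (\<lambda>A i. if i \<in> A then 1 else 0) ` Pow {..<m}"
      by (rule image_eqI) auto
  qed
  then show ?thesis
    by (rule finite_subset) simp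
qed

lemma diff_less_Max_Min:
  assumes "finite A" and "a \<in> A" and "b \<in> A"
  shows "f b - f a < Max (f ` A) - Min (f ` A) + (1::int)"
proof -
  have "f b \<le> Max (f ` A)" "Min (f ` A) \<le> f a"
    using assms by simp_all
  then show ?thesis by linarith
qed

lemma adjacent_iff_flip: "adjacent m u w \<longleftrightarrow> u \<in> cube m \<and> (\<exists>j<m. w = flip u j)"
proof
  assume "adjacent m u w"
  then have u: "u \<in> cube m" and w: "w \<in> cube m" and "card {i. i < m \<and> u i \<noteq> w i} = 1"
    by (auto simp: adjacent_def)
  then obtain j where j: "{i. i < m \<and> u i \<noteq> w i} = {j}"
    by (auto simp: card_1_singleton_iff)
  then have "j < m" by blast
  have "w i = flip u j i" for i
  proof (cases "i < m")
    case True
    have "u i \<noteq> w i \<longleftrightarrow> i = j"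
      using j True by blast
    then show ?thesis
      using cube_values[OF u True] cube_values[OF w True] by (auto simp: flip_def)
  next
    case False
    then show ?thesis
      using u w \<open>j < m\<close> by (auto simp: flip_def cube_def)
  qed
  then show "u \<in> cube m \<and> (\<exists>j<m. w = flip u j)"
    using u \<open>j < m\<close> by blast
next
  assume "u \<in> cube m \<and> (\<exists>j<m. w = flip u j)"
  then obtain j where u: "u \<in> cube m" and "j < m" and w: "w = flip u j"
    by blast
  have "u j \<noteq> 1 - u j"
    using cube_values[OF u \<open>j < m\<close>] by auto
  then have "{i. i < m \<and> u i \<noteq> w i} = {j}"
    using \<open>j < m\<close> unfolding w flip_def by auto
  then show "adjacent m u w"
    using u flip_in_cube[OF u \<open>j < m\<close>] by (simp add: adjacent_def w)
qed

lemma local_max_flip_le: "local_max f m v \<Longrightarrow> j < m \<Longrightarrow> f (flip v j) \<le> f v"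
  unfolding local_max_def by (metis adjacent_iff_flip not_less)

lemma sum_flip:
  assumes "j < n"
  shows "(\<Sum>i<n. flip v j i) = (\<Sum>i<n. v i) + (1 - 2 * v j)"
proof -
  have "flip v j = (\<lambda>i. v i + (if i = j then 1 - 2 * v j else 0))"
    by (auto simp: flip_def)
  then show ?thesis
    using assms by (simp add: sum.distrib)
qed

lemma sum_flip_ge: "n \<le> j \<Longrightarrow> (\<Sum>i<n. flip v j i) = (\<Sum>i<n. v i)"
  by (auto simp: flip_def intro: sum.cong)

lemma sum_cube_bounds:
  assumes "t \<in> cube n"
  shows "0 \<le> (\<Sum>i<n. t i) \<and> (\<Sum>i<n. t i) \<le> int n"
proof -
  have bounds: "0 \<le> t i \<and> t i \<le> 1" if "i < n" for i
    using cube_values[OF assms that] by auto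
  have "0 \<le> (\<Sum>i<n. t i)"
    by (rule sum_nonneg) (simp add: bounds)
  moreover have "(\<Sum>i<n. t i) \<le> (\<Sum>i<n. 1)"
    by (rule sum_mono) (simp add: bounds)
  ultimately show ?thesis by simp
qed

lemma cube_sum_eq_0_imp_origin:
  assumes "t \<in> cube n" and "(\<Sum>i<n. t i) = 0"
  shows "t = origin"
proof (rule cube_eq_originI[OF assms(1)])
  have "0 \<le> t i" if "i \<in> {..<n}" for i
    using cube_values[OF assms(1)] that by fastforce
  then have "\<forall>i\<in>{..<n}. t i = 0"
    using assms(2) sum_nonneg_eq_0_iff[of "{..<n}" t] by simp
  then show "\<And>i. i < n \<Longrightarrow> t i = 0" by simp
qed

lemma cube_sum_eq_dim_imp_ones:
  assumes "t \<in> cube n" and "(\<Sum>i<n. t i) = int n"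
  shows "t = ones n"
proof (rule cube_eq_onesI[OF assms(1)])
  have "(\<Sum>i<n. 1 - t i) = 0"
    using assms(2) by (simp add: sum_subtractf)
  moreover have "0 \<le> 1 - t i" if "i \<in> {..<n}" for i
    using cube_values[OF assms(1)] that by fastforce
  ultimately have "\<forall>i\<in>{..<n}. 1 - t i = 0"
    using sum_nonneg_eq_0_iff[of "{..<n}" "\<lambda>i. 1 - t i"] by simp
  then show "\<And>i. i < n \<Longrightarrow> t i = 1" by simp
qed

inductive reachable :: "((nat \<Rightarrow> int) \<Rightarrow> int) \<Rightarrow> nat \<Rightarrow> (nat \<Rightarrow> int) \<Rightarrow> bool" for f m where
  origin: "reachable f m origin"
| step: "reachable f m v \<Longrightarrow> adjacent m v w \<Longrightarrow> f v < f w \<Longrightarrow> reachable f m w"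

lemma increasing_path_reachable:
  assumes path: "increasing_path f m vs" and start: "hd vs = origin"
  shows "reachable f m (last vs)"
proof -
  have "reachable f m (vs ! j)" if "j < length vs" for j
    using that
  proof (induction j)
    case 0
    then show ?case using start reachable.origin by (simp add: hd_conv_nth)
  next
    case (Suc j)
    moreover have "adjacent m (vs ! j) (vs ! Suc j)" "f (vs ! j) < f (vs ! Suc j)"
      using path Suc.prems by (simp_all add: increasing_path_def)
    ultimately show ?case
      using reachable.step by simp
  qed
  then show ?thesis
    using path by (simp add: increasing_path_def last_conv_nth)
qed

definition prefix :: "nat \<Rightarrow> (nat \<Rightarrow> int) \<Rightarrow> nat \<Rightarrow> int" where
  "prefix n v = (\<lambda>i. if i < n then v i else 0)"

definition suffix :: "nat \<Rightarrow> (nat \<Rightarrow> int) \<Rightarrow> nat \<Rightarrow> int" where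
  "suffix n v = (\<lambda>i. v (n + i))"

lemma prefix_in_cube: "v \<in> cube (n + m) \<Longrightarrow> prefix n v \<in> cube n"
  by (simp add: cube_def prefix_def)

lemma sum_prefix: "(\<Sum>i<n. prefix n v i) = (\<Sum>i<n. v i)"
  by (simp add: prefix_def)

lemma prefix_flip: "j < n \<Longrightarrow> prefix n (flip v j) = flip (prefix n v) j"
  by (auto simp: prefix_def flip_def)

lemma prefix_flip_ge: "n \<le> j \<Longrightarrow> prefix n (flip v j) = prefix n v"
  by (auto simp: prefix_def flip_def)

lemma suffix_flip: "suffix n (flip v (n + i)) = flip (suffix n v) i"
  by (auto simp: suffix_def flip_def)

lemma suffix_flip_less: "j < n \<Longrightarrow> suffix n (flip v j) = suffix n v"
  by (auto simp: suffix_def flip_def)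

lemma ones_add_eqI:
  assumes "v \<in> cube (n + m)" and "prefix n v = ones n" and "suffix n v = ones m"
  shows "v = ones (n + m)"
proof (rule cube_eq_onesI[OF assms(1)])
  fix i assume "i < n + m"
  then show "v i = 1"
    using fun_cong[OF assms(2), of i] fun_cong[OF assms(3), of "i - n"]
    by (cases "i < n") (simp_all add: prefix_def suffix_def ones_def)
qed

lemma ones_Suc_eq_flip: "ones (Suc s) = flip (ones s) s"
  by (auto simp: ones_def flip_def)

(* The terms of f_(n+4) beyond f_n, with M = M_n, N = n, S = x_1 + ... + x_n and
   y = (x_(n+1), ..., x_(n+4)). *)
definition gadget :: "int \<Rightarrow> int \<Rightarrow> int \<Rightarrow> (nat \<Rightarrow> int) \<Rightarrow> int" where
  "gadget M N S y =
     (let a = y 0; b = y 1; c = y 2; d = y 3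
      in - M * N^2 * a + M * (N+1) * S * a - b - 2 * M * N * S * b
         + 2 * M * N * (N+2) * a * b - 4 * S * c + 2 * a * c + 2 * b * c
         - 3 * c + (M * (N - 1) + 4) * S * d + 6 * M * N^2 * c * d
         - 5 * M * N^2 * d)"

definition gadget_slope :: "int \<Rightarrow> int \<Rightarrow> (nat \<Rightarrow> int) \<Rightarrow> int" where
  "gadget_slope M N y = M * (N + 1) * y 0 - 2 * M * N * y 1 - 4 * y 2 + (M * (N - 1) + 4) * y 3"

lemma gadget_add_sum: "gadget M N (S + e) y = gadget M N S y + e * gadget_slope M N y"
  unfolding gadget_def gadget_slope_def Let_def by (simp add: algebra_simps)

lemma gadget_slope_ones:
  "s \<in> {0, 4} \<Longrightarrow> gadget_slope M N (ones s) = 0"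
  "s = 1 \<Longrightarrow> gadget_slope M N (ones s) = M * N + M"
  "s = 2 \<Longrightarrow> gadget_slope M N (ones s) = M - M * N"
  "s = 3 \<Longrightarrow> gadget_slope M N (ones s) = M - M * N - 4"
  by (auto simp: gadget_slope_def ones_def algebra_simps)

lemma gadget_improving_flip_iff:
  fixes M N S :: int
  assumes "M \<ge> 1" "N \<ge> 2" "0 \<le> S" "S \<le> N" "s \<le> 4" "i < 4"
    and "s = 1 \<Longrightarrow> S = N" "s = 3 \<Longrightarrow> S = 0"
  shows "gadget M N S (ones s) < gadget M N S (flip (ones s) i) \<longleftrightarrow>
    i = s \<and> (s = 0 \<longrightarrow> S = N) \<and> (s = 2 \<longrightarrow> S = 0)"
proof -
  \<comment> \<open>As a function of the products P, Q, U, V each of the 20 cases is a linear inequality.\<close>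
  define P Q U V where "P = M * N" and "Q = M * N * N" and "U = M * S" and "V = M * N * S"
  have gadget_linear: "gadget M N S y = - Q * y 0 + (V + U) * y 0 - y 1 - 2 * V * y 1
      + 2 * (Q + 2 * P) * y 0 * y 1 - 4 * S * y 2 + 2 * y 0 * y 2 + 2 * y 1 * y 2 - 3 * y 2
      + (V - U + 4 * S) * y 3 + 6 * Q * y 2 * y 3 - 5 * Q * y 3" for y
    unfolding gadget_def P_def Q_def U_def V_def Let_def power2_eq_square by algebra
  have "M * 2 \<le> M * N" "1 * N \<le> M * N"
    using assms by (intro mult_left_mono mult_right_mono; simp)+
  then have P_bounds: "2 * M \<le> P" "M \<le> P" "N \<le> P"
    using assms unfolding P_def by linarith+
  have "P * 2 \<le> P * N" "M * S \<le> M * N" "M * S \<le> P * S" "P * S \<le> P * N"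
    using P_bounds assms by (intro mult_left_mono mult_right_mono; simp)+
  moreover have "0 \<le> M * S"
    using assms by simp
  ultimately have "2 * P \<le> Q" "2 * N \<le> Q" "0 \<le> U" "U \<le> P" "U \<le> V" "V \<le> Q"
    using P_bounds unfolding P_def Q_def U_def V_def by (simp_all add: mult.assoc)
  moreover have "V + U < Q \<or> S = N"
  proof (rule disjCI)
    assume "S \<noteq> N"
    then have "P * S \<le> P * (N - 1)" "M * S \<le> M * (N - 1)"
      using P_bounds assms by (intro mult_left_mono; simp)+
    then show "V + U < Q"
      using assms unfolding P_def Q_def U_def V_def by (simp add: algebra_simps)
  qed
  moreover have "S = N \<Longrightarrow> U = P \<and> V = Q" "S = 0 \<Longrightarrow> U = 0 \<and> V = 0"
    using assms unfolding P_def Q_def U_def V_def by simp_all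
  ultimately show ?thesis
    using P_bounds assms
    by (auto simp: gadget_linear ones_def flip_def less_Suc_eq numeral_eq_Suc)
qed

lemma fpoly_Suc:
  "fpoly (Suc k) x = fpoly k x
     + gadget (Max (fpoly k ` cube (4 * k + 2)) - Min (fpoly k ` cube (4 * k + 2)) + 1)
         (int (4 * k + 2)) (\<Sum>i<4 * k + 2. x i) (suffix (4 * k + 2) x)"
  unfolding fpoly.simps gadget_def suffix_def Let_def add_0_right by algebra

lemma fpoly_cong: "(\<And>i. i < 4 * k + 2 \<Longrightarrow> x i = y i) \<Longrightarrow> fpoly k x = fpoly k y"
proof (induction k arbitrary: x y)
  case 0
  then show ?case by simp
next
  case (Suc k)
  have "fpoly k x = fpoly k y"
    by (rule Suc.IH) (simp add: Suc.prems)
  moreover have "(\<Sum>i<4 * k + 2. x i) = (\<Sum>i<4 * k + 2. y i)"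
    by (rule sum.cong) (simp_all add: Suc.prems)
  moreover have "suffix (4 * k + 2) x i = suffix (4 * k + 2) y i" if "i < 4" for i
    using that by (simp add: suffix_def Suc.prems)
  ultimately show ?case
    unfolding fpoly_Suc gadget_def by (simp add: numeral_eq_Suc)
qed

lemma fpoly_prefix: "fpoly k (prefix (4 * k + 2) x) = fpoly k x"
  by (rule fpoly_cong) (simp add: prefix_def)

locale gadget_extension =
  fixes g F :: "(nat \<Rightarrow> int) \<Rightarrow> int" and n :: nat and M :: int
  assumes two_le_n: "2 \<le> n"
    and g_prefix: "\<And>x. g (prefix n x) = g x"
    and g_spread: "\<And>t t'. t \<in> cube n \<Longrightarrow> t' \<in> cube n \<Longrightarrow> g t' - g t < M"
    and F_eq: "\<And>x. F x = g x + gadget M (int n) (\<Sum>i<n. x i) (suffix n x)"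
begin

lemma one_le_M: "1 \<le> M"
  using g_spread[OF origin_in_cube origin_in_cube] by simp

lemma two_M_le: "2 * M \<le> M * int n"
  using mult_left_mono[of 2 "int n" M] two_le_n one_le_M by simp

lemma F_flip_low:
  assumes "j < n"
  shows "F (flip v j) = F v + (g (flip (prefix n v) j) - g (prefix n v))
    + (1 - 2 * v j) * gadget_slope M (int n) (suffix n v)"
proof -
  have "g (flip v j) = g (flip (prefix n v) j)" "g v = g (prefix n v)"
    using g_prefix[of "flip v j"] g_prefix[of v] prefix_flip[OF assms] by simp_all
  then show ?thesis
    using F_eq[of v] F_eq[of "flip v j"] sum_flip[OF assms] suffix_flip_less[OF assms]
    by (simp add: gadget_add_sum)
qed

lemma F_flip_high:
  "F (flip v (n + i)) - F v =
    gadget M (int n) (\<Sum>k<n. v k) (flip (suffix n v) i) - gadget M (int n) (\<Sum>k<n. v k) (suffix n v)"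
proof -
  have "g (flip v (n + i)) = g v"
    using g_prefix[of "flip v (n + i)"] g_prefix[of v] prefix_flip_ge[of n "n + i" v] by simp
  then show ?thesis
    using F_eq[of v] F_eq[of "flip v (n + i)"] sum_flip_ge[of n "n + i" v] suffix_flip[of n v i]
    by simp
qed

definition at_stage :: "nat \<Rightarrow> (nat \<Rightarrow> int) \<Rightarrow> bool" where
  "at_stage s v \<longleftrightarrow> v \<in> cube (n + 4) \<and> s \<le> 4 \<and> suffix n v = ones s
     \<and> (s = 1 \<longrightarrow> prefix n v = ones n) \<and> (s = 3 \<longrightarrow> prefix n v = origin)
     \<and> (s \<in> {0, 4} \<longrightarrow> reachable g n (prefix n v))"

lemma at_stage_sum:
  assumes "at_stage s v"
  shows "0 \<le> (\<Sum>i<n. v i) \<and> (\<Sum>i<n. v i) \<le> int n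
    \<and> (s = 1 \<longrightarrow> (\<Sum>i<n. v i) = int n) \<and> (s = 3 \<longrightarrow> (\<Sum>i<n. v i) = 0)"
proof -
  have "prefix n v \<in> cube n"
    using assms prefix_in_cube by (auto simp: at_stage_def)
  moreover have "s = 1 \<Longrightarrow> (\<Sum>i<n. prefix n v i) = int n"
    using assms by (simp add: at_stage_def ones_def)
  moreover have "s = 3 \<Longrightarrow> (\<Sum>i<n. prefix n v i) = 0"
    using assms by (simp add: at_stage_def origin_def)
  ultimately show ?thesis
    using sum_cube_bounds[of "prefix n v" n] by (simp add: sum_prefix)
qed

lemma at_stage_flip_high_iff:
  assumes "at_stage s v" and "i < 4"
  shows "F v < F (flip v (n + i)) \<longleftrightarrow>
    i = s \<and> (s = 0 \<longrightarrow> (\<Sum>k<n. v k) = int n) \<and> (s = 2 \<longrightarrow> (\<Sum>k<n. v k) = 0)"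
proof -
  have "s \<le> 4" "suffix n v = ones s"
    using assms(1) by (simp_all add: at_stage_def)
  let ?S = "\<Sum>k<n. v k"
  have "F v < F (flip v (n + i)) \<longleftrightarrow> 0 < F (flip v (n + i)) - F v"
    by simp
  also have "\<dots> \<longleftrightarrow> gadget M (int n) ?S (ones s) < gadget M (int n) ?S (flip (ones s) i)"
    using F_flip_high[of v i] \<open>suffix n v = ones s\<close> by simp
  also have "\<dots> \<longleftrightarrow> i = s \<and> (s = 0 \<longrightarrow> ?S = int n) \<and> (s = 2 \<longrightarrow> ?S = 0)"
    using at_stage_sum[OF assms(1)] two_le_n one_le_M assms(2) \<open>s \<le> 4\<close>
    by (intro gadget_improving_flip_iff) auto
  finally show ?thesis .
qed

lemma at_stage_flip_low:
  assumes v: "at_stage s v" and "j < n" and up: "F v < F (flip v j)"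
  shows "at_stage s (flip v j)"
proof -
  let ?t = "prefix n v"
  have t: "?t \<in> cube n" and s: "suffix n v = ones s"
    using v prefix_in_cube by (auto simp: at_stage_def)
  have adj: "adjacent n ?t (flip ?t j)"
    using t \<open>j < n\<close> by (auto simp: adjacent_iff_flip)
  have spread: "g (flip ?t j) - g ?t < M" "g ?t - g (flip ?t j) < M"
    using g_spread t flip_in_cube[OF t \<open>j < n\<close>] by auto
  have gain: "0 < g (flip ?t j) - g ?t + (1 - 2 * ?t j) * gadget_slope M (int n) (ones s)"
    using up F_flip_low[OF \<open>j < n\<close>, of v] s \<open>j < n\<close> by (simp add: prefix_def)
  have "s \<noteq> 1"
  proof
    assume "s = 1"
    then have "?t j = 1"
      using v \<open>j < n\<close> by (simp add: at_stage_def ones_def)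
    then show False
      using gain spread gadget_slope_ones(2)[OF \<open>s = 1\<close>] two_M_le by simp
  qed
  moreover have "s \<noteq> 3"
  proof
    assume "s = 3"
    then have "?t j = 0"
      using v by (simp add: at_stage_def origin_def)
    then show False
      using gain spread gadget_slope_ones(4)[OF \<open>s = 3\<close>] two_M_le by simp
  qed
  moreover have "reachable g n (flip ?t j)" if "s \<in> {0, 4}"
  proof -
    have "g ?t < g (flip ?t j)"
      using gain gadget_slope_ones(1)[OF that] by simp
    then show ?thesis
      using v that adj reachable.step by (auto simp: at_stage_def)
  qed
  ultimately show ?thesis
    using v flip_in_cube[of v "n + 4" j] \<open>j < n\<close>
    by (auto simp: at_stage_def prefix_flip suffix_flip_less)
qed

lemma at_stage_flip_high:
  assumes v: "at_stage s v" and "i < 4" and up: "F v < F (flip v (n + i))"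
  shows "at_stage (Suc s) (flip v (n + i))"
proof -
  let ?t = "prefix n v"
  have i: "i = s" and sum_full: "s = 0 \<Longrightarrow> (\<Sum>k<n. v k) = int n"
    and sum_empty: "s = 2 \<Longrightarrow> (\<Sum>k<n. v k) = 0"
    using up at_stage_flip_high_iff[OF v \<open>i < 4\<close>] by simp_all
  have t: "?t \<in> cube n"
    using v prefix_in_cube by (auto simp: at_stage_def)
  have "s = 0 \<Longrightarrow> ?t = ones n"
    using cube_sum_eq_dim_imp_ones[OF t] sum_full by (simp add: sum_prefix)
  moreover have "s = 2 \<Longrightarrow> ?t = origin"
    using cube_sum_eq_0_imp_origin[OF t] sum_empty by (simp add: sum_prefix)
  moreover have "s = 3 \<Longrightarrow> reachable g n ?t"
    using v reachable.origin by (simp add: at_stage_def)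
  ultimately show ?thesis
    using v flip_in_cube[of v "n + 4" "n + i"] \<open>i < 4\<close>
    by (auto simp: at_stage_def i prefix_flip_ge suffix_flip ones_Suc_eq_flip)
qed

lemma reachable_at_stage: "reachable F (n + 4) v \<Longrightarrow> \<exists>s. at_stage s v"
proof (induction rule: reachable.induct)
  case origin
  have "at_stage 0 origin"
    using origin_in_cube reachable.origin
    by (simp add: at_stage_def prefix_def suffix_def origin_def ones_def)
  then show ?case ..
next
  case (step v w)
  then obtain s j where v: "at_stage s v" and "j < n + 4" and w: "w = flip v j"
    by (auto simp: adjacent_iff_flip)
  show ?case
  proof (cases "j < n")
    case True
    then show ?thesis
      using at_stage_flip_low[OF v] step.hyps(3) w by blast
  next
    case False
    then have "j = n + (j - n)" "j - n < 4"
      using \<open>j < n + 4\<close> by simp_all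
    then show ?thesis
      using at_stage_flip_high[OF v] step.hyps(3) w by metis
  qed
qed

lemma at_stage_local_max_prefix:
  assumes v: "at_stage s v" and "s \<in> {0, 4}" and max: "local_max F (n + 4) v"
  shows "local_max g n (prefix n v)"
  unfolding local_max_def
proof (intro conjI allI impI)
  show "prefix n v \<in> cube n"
    using v prefix_in_cube by (auto simp: at_stage_def)
next
  fix w assume "adjacent n (prefix n v) w"
  then obtain j where "j < n" and w: "w = flip (prefix n v) j"
    by (auto simp: adjacent_iff_flip)
  have "suffix n v = ones s"
    using v by (simp add: at_stage_def)
  then have "F (flip v j) = F v + (g w - g (prefix n v))"
    using F_flip_low[OF \<open>j < n\<close>, of v] gadget_slope_ones(1)[OF \<open>s \<in> {0, 4}\<close>] w by simp
  then show "\<not> g (prefix n v) < g w"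
    using local_max_flip_le[OF max, of j] \<open>j < n\<close> by simp
qed

lemma at_stage_2_improvable:
  assumes v: "at_stage 2 v" and "prefix n v \<noteq> origin"
  obtains j where "j < n" and "F v < F (flip v j)"
proof -
  let ?t = "prefix n v"
  have t: "?t \<in> cube n"
    using v prefix_in_cube by (auto simp: at_stage_def)
  obtain j where "j < n" and "?t j \<noteq> 0"
    using cube_eq_originI[OF t] assms(2) by blast
  then have "v j = 1"
    using cube_values[OF t \<open>j < n\<close>] by (simp add: prefix_def)
  moreover have "g ?t - g (flip ?t j) < M"
    using g_spread t flip_in_cube[OF t \<open>j < n\<close>] by simp
  moreover have "suffix n v = ones 2"
    using v by (simp add: at_stage_def)
  ultimately have "F v < F (flip v j)"
    using F_flip_low[OF \<open>j < n\<close>, of v] gadget_slope_ones(3)[of 2 M "int n"] two_M_le by simp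
  with \<open>j < n\<close> show ?thesis ..
qed

lemma at_stage_local_max:
  assumes g_max_ones: "\<And>t. reachable g n t \<Longrightarrow> local_max g n t \<Longrightarrow> t = ones n"
    and v: "at_stage s v" and max: "local_max F (n + 4) v"
  shows "v = ones (n + 4)"
proof -
  let ?t = "prefix n v" and ?S = "\<Sum>k<n. v k"
  have stuck: "s = 4 \<or> (s = 0 \<and> ?S \<noteq> int n) \<or> (s = 2 \<and> ?S \<noteq> 0)"
  proof (rule ccontr)
    assume "\<not> ?thesis"
    then have "s < 4" and "F v < F (flip v (n + s))"
      using at_stage_flip_high_iff[OF v, of s] v by (auto simp: at_stage_def)
    then show False
      using local_max_flip_le[OF max, of "n + s"] by simp
  qed
  have "s \<noteq> 2"
  proof
    assume "s = 2"
    then have "?t \<noteq> origin"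
      using stuck sum_prefix[of n v] by (auto simp: origin_def)
    then obtain j where "j < n" and "F v < F (flip v j)"
      using at_stage_2_improvable v \<open>s = 2\<close> by blast
    then show False
      using local_max_flip_le[OF max, of j] by simp
  qed
  with stuck have "s \<in> {0, 4}"
    by auto
  then have "?t = ones n"
    using g_max_ones at_stage_local_max_prefix[OF v _ max] v by (auto simp: at_stage_def)
  then have "s = 4"
    using stuck \<open>s \<noteq> 2\<close> sum_prefix[of n v] by (auto simp: ones_def)
  then show ?thesis
    using ones_add_eqI v \<open>?t = ones n\<close> by (auto simp: at_stage_def)
qed

end

lemma fpoly_0_local_max: "local_max (fpoly 0) 2 v \<Longrightarrow> v = ones 2"
proof -
  assume max: "local_max (fpoly 0) 2 v"
  then have v: "v \<in> cube 2"
    by (simp add: local_max_def)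
  show "v = ones 2"
  proof (rule cube_eq_onesI[OF v])
    fix i :: nat assume "i < 2"
    then have "i = 0 \<or> i = 1"
      by auto
    then show "v i = 1"
      using local_max_flip_le[OF max \<open>i < 2\<close>] cube_values[OF v \<open>i < 2\<close>]
      by (auto simp: flip_def)
  qed
qed

lemma fpoly_reachable_local_max:
  "reachable (fpoly k) (4 * k + 2) v \<Longrightarrow> local_max (fpoly k) (4 * k + 2) v \<Longrightarrow> v = ones (4 * k + 2)"
proof (induction k arbitrary: v)
  case 0
  then show ?case
    using fpoly_0_local_max by (simp only: mult_0_right add_0)
next
  case (Suc k)
  let ?n = "4 * k + 2"
  interpret gadget_extension "fpoly k" "fpoly (Suc k)" ?n
    "Max (fpoly k ` cube ?n) - Min (fpoly k ` cube ?n) + 1"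
  proof
    show "fpoly k t' - fpoly k t < Max (fpoly k ` cube ?n) - Min (fpoly k ` cube ?n) + 1"
      if "t \<in> cube ?n" and "t' \<in> cube ?n" for t t'
      using finite_cube that by (rule diff_less_Max_Min)
  qed (simp, rule fpoly_prefix, rule fpoly_Suc)
  have "4 * Suc k + 2 = ?n + 4"
    by simp
  then show ?case
    using at_stage_local_max[OF Suc.IH] reachable_at_stage Suc.prems by metis
qed

theorem lemma2:
  fixes k :: nat and vs :: "(nat \<Rightarrow> int) list"
  assumes "maximal_increasing_path (fpoly k) (4 * k + 2) vs"
    and "hd vs = origin"
  shows "last vs = ones (4 * k + 2)"
  using assms increasing_path_reachable fpoly_reachable_local_max
  unfolding maximal_increasing_path_def by blast

end
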